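(* Let $X$ be a real Banach space, $f\in\Gamma_0(X)$ and $S_f^=\ne\emptyset$. Suppose there exist sequences $\{x_k\}\subset X$ and $\{x_k^*\}\subset X^*$ such that $x_k^*\in\partial f(x_k)$ for all $k$, $\|x_k\|\to\infty$, $\|x_k^*\|\to0$ as $k\to\infty$, and $\{f(x_k)\}$ is bounded below. Then for any $\varepsilon\in[0,|\partial f|_{\rm bd}]$ and any $g\in\mathrm{Ptb}(f,\varepsilon)$, the function $g-f$ is constant.
   Context: $\Gamma_0(X)$ denotes the class of extended-real-valued proper convex lower semicontinuous functions on $X$. For convex $f$, $\partial f(x):=\{x^*\in X^*\mid \langle x^*,u-x\rangle\le f(u)-f(x)\ \forall u\in X\}$ (empty if $x\notin\mathrm{dom}f$). $d(0,\emptyset)=+\infty$, $\inf\emptyset=+\infty$. $S_f:=\{x\mid f(x)\le0\}$, $S_f^=:=\{x\mid f(x)=0\}$. $|\partial f|_{\rm bd}:=\inf_{f(x)=0} d(0,\mathrm{bd}\,\partial f(x))$ (boundary in the norm topology of $X^*$). For $x\in S_f^=$, $\varepsilon\ge0$, $\delta\ge0$: $\tau(f,x,\varepsilon,\delta):=\inf_{u:\,f(u)\ge-\varepsilon\|u-x\|-\delta} d(0,\partial f(u))$ if $0\notin\mathrm{int}\,\partial f(x)$, and $\tau(f,x,\varepsilon,\delta):=d(0,\mathrm{bd}\,\partial f(x))$ if $0\in\mathrm{int}\,\partial f(x)$. Let $S_f\neq\emptyset$, $\varepsilon\ge0$. A function $g:X\to\mathbb{R}\cup\{+\infty\}$ is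 an $\varepsilon$-perturbation of $f$ if $S_g\ne\emptyset$, $g=f+p$ with $p:X\to\mathbb{R}$ convex, and there exist $x\in S_f^=$ and $\xi\ge0$ such that $\xi+|\partial f|_{\rm bd}-\tau(f,x,\xi,|p(x)|)\le\varepsilon$ and $|p(u)-p(x)|\le\xi\|u-x\|$ for all $u\in X$. The set of these is $\mathrm{Ptb}(f,\varepsilon)$. *)

theory Defs
  imports "HOL-Analysis.Analysis"
begin

text \<open>Dual space X* is rendered as the bounded linear functionals 'a \<Rightarrow>L real
  with the operator norm; extended-real-valued functions take values in ereal.\<close>

definition proper_fun :: "('a \<Rightarrow> ereal) \<Rightarrow> bool" where
  "proper_fun f \<longleftrightarrow> (\<forall>x. f x \<noteq> -\<infinity>) \<and> (\<exists>x. f x \<noteq> \<infinity>)"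

definition convex_efun :: "('a::real_vector \<Rightarrow> ereal) \<Rightarrow> bool" where
  "convex_efun f \<longleftrightarrow> (\<forall>x y t. 0 \<le> t \<and> t \<le> 1 \<longrightarrow>
      f ((1 - t) *\<^sub>R x + t *\<^sub>R y) \<le> ereal (1 - t) * f x + ereal t * f y)"

definition lsc_fun :: "('a::topological_space \<Rightarrow> ereal) \<Rightarrow> bool" where
  "lsc_fun f \<longleftrightarrow> (\<forall>x. f x \<le> Liminf (at x) f)"

definition Gamma0 :: "('a::real_normed_vector \<Rightarrow> ereal) set" where
  "Gamma0 = {f. proper_fun f \<and> convex_efun f \<and> lsc_fun f}"

definition subdiff :: "('a::real_normed_vector \<Rightarrow> ereal) \<Rightarrow> 'a \<Rightarrow> ('a \<Rightarrow>\<^sub>L real) set" where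
  "subdiff f x = (if f x \<noteq> \<infinity> \<and> f x \<noteq> -\<infinity> then
      {xs. \<forall>u. ereal (blinfun_apply xs (u - x)) \<le> f u - f x} else {})"

text \<open>distance from 0 to a set of functionals; Inf of the empty set is \<infinity>\<close>
definition dist0 :: "('a::real_normed_vector \<Rightarrow>\<^sub>L real) set \<Rightarrow> ereal" where
  "dist0 A = (INF y\<in>A. ereal (norm y))"

definition sublevel0 :: "('a \<Rightarrow> ereal) \<Rightarrow> 'a set" where
  "sublevel0 f = {x. f x \<le> 0}"

definition level0 :: "('a \<Rightarrow> ereal) \<Rightarrow> 'a set" where
  "level0 f = {x. f x = 0}"

definition subdiff_bd :: "('a::real_normed_vector \<Rightarrow> ereal) \<Rightarrow> ereal" where
  "subdiff_bd f = (INF x\<in>level0 f. dist0 (frontier (subdiff f x)))"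

definition tau :: "('a::real_normed_vector \<Rightarrow> ereal) \<Rightarrow> 'a \<Rightarrow> real \<Rightarrow> real \<Rightarrow> ereal" where
  "tau f x \<epsilon> \<delta> = (if 0 \<notin> interior (subdiff f x)
      then (INF u\<in>{u. f u \<ge> ereal (- \<epsilon> * norm (u - x) - \<delta>)}. dist0 (subdiff f u))
      else dist0 (frontier (subdiff f x)))"

definition Ptb :: "('a::real_normed_vector \<Rightarrow> ereal) \<Rightarrow> real \<Rightarrow> ('a \<Rightarrow> ereal) set" where
  "Ptb f \<epsilon> = {g. sublevel0 g \<noteq> {} \<and>
      (\<exists>p :: 'a \<Rightarrow> real. convex_on UNIV p \<and> g = (\<lambda>u. f u + ereal (p u)) \<and>
        (\<exists>x \<in> level0 f. \<exists>\<xi> \<ge> 0.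
           ereal \<xi> + subdiff_bd f - tau f x \<xi> \<bar>p x\<bar> \<le> ereal \<epsilon> \<and>
           (\<forall>u. \<bar>p u - p x\<bar> \<le> \<xi> * norm (u - x))))}"

end

theory Submission
  imports Defs
begin

text \<open>If the Lipschitz constant \<xi> of the perturbation p were positive, the points x k,
  being far away and having f bounded below on them, would eventually lie in the set over which
  \<tau>(f, x, \<xi>, \<delta>) is an infimum; as their subgradients tend to 0, \<tau> vanishes. This uses
  0 \<notin> int \<partial>f(x): a ball of subgradients at x would make f grow linearly away from x, whereas
  f(x k) - f(x) \<le> \<parallel>xs k\<parallel> \<parallel>x k - x\<parallel> with \<parallel>xs k\<parallel> \<rightarrow> 0. With \<tau> = 0 the condition
  \<xi> + |\<partial>f|bd \<le> \<epsilon> \<le> |\<partial>f|bd forces \<xi> = 0, so p is constant.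
  The linear growth needs norming functionals, i.e. the Hahn-Banach theorem, which follows from
  the fact that a minimal sublinear functional is linear.\<close>

definition sublinear :: "('a::real_vector \<Rightarrow> real) \<Rightarrow> bool" where
  "sublinear q \<longleftrightarrow> (\<forall>x y. q (x + y) \<le> q x + q y) \<and> (\<forall>c x. 0 \<le> c \<longrightarrow> q (c *\<^sub>R x) = c * q x)"

lemma sublinear_add_le: "sublinear q \<Longrightarrow> q (x + y) \<le> q x + q y"
  unfolding sublinear_def by blast

lemma sublinear_scaleR: "sublinear q \<Longrightarrow> 0 \<le> c \<Longrightarrow> q (c *\<^sub>R x) = c * q x"
  unfolding sublinear_def by blast

lemma sublinear_zero: "sublinear q \<Longrightarrow> q 0 = 0"
  using sublinear_scaleR[of q 0 0] by simp

lemma sublinear_neg_le: "sublinear q \<Longrightarrow> - q (- y) \<le> q y"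
  using sublinear_add_le[of q y "- y"] sublinear_zero[of q] by simp

lemma linear_if_sublinear_odd:
  assumes q: "sublinear q" and odd: "\<And>x. q (- x) = - q x"
  shows "linear q"
proof
  fix x y
  have "q (- (x + y)) \<le> q (- x) + q (- y)"
    using sublinear_add_le[OF q, of "- x" "- y"] by (simp add: add.commute)
  then show "q (x + y) = q x + q y"
    using sublinear_add_le[OF q, of x y] odd by (smt (verit))
next
  fix c :: real and x
  show "q (c *\<^sub>R x) = c *\<^sub>R q x"
  proof (cases "0 \<le> c")
    case True
    then show ?thesis by (simp add: sublinear_scaleR[OF q])
  next
    case False
    then have "q ((- c) *\<^sub>R (- x)) = (- c) * q (- x)" by (intro sublinear_scaleR[OF q]) simp
    moreover have "(- c) *\<^sub>R (- x) = c *\<^sub>R x" by simp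
    ultimately show ?thesis using odd[of x] by simp
  qed
qed

text \<open>Reducing q along x gives a sublinear functional below q that satisfies q(-x) \<le> -q(x);
  so a minimal sublinear functional is odd, hence linear.\<close>

definition reduce_along :: "('a::real_vector \<Rightarrow> real) \<Rightarrow> 'a \<Rightarrow> 'a \<Rightarrow> real" where
  "reduce_along q x y = Inf ((\<lambda>t. q (y + t *\<^sub>R x) - t * q x) ` {0..})"

lemma reduce_along_le:
  assumes q: "sublinear q" and t: "0 \<le> t"
  shows "reduce_along q x y \<le> q (y + t *\<^sub>R x) - t * q x"
  unfolding reduce_along_def
proof (rule cInf_lower)
  show "bdd_below ((\<lambda>t. q (y + t *\<^sub>R x) - t * q x) ` {0..})"
  proof (rule bdd_belowI2)
    fix s :: real assume "s \<in> {0..}"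
    then have "q (s *\<^sub>R x) = s * q x" by (simp add: sublinear_scaleR[OF q])
    moreover have "q ((y + s *\<^sub>R x) + - y) \<le> q (y + s *\<^sub>R x) + q (- y)"
      by (rule sublinear_add_le[OF q])
    ultimately show "- q (- y) \<le> q (y + s *\<^sub>R x) - s * q x" by simp
  qed
qed (use t in auto)

lemma reduce_along_greatest:
  "(\<And>t. 0 \<le> t \<Longrightarrow> a \<le> q (y + t *\<^sub>R x) - t * q x) \<Longrightarrow> a \<le> reduce_along q x y"
  unfolding reduce_along_def by (rule cInf_greatest) auto

lemma reduce_along_le_self: "sublinear q \<Longrightarrow> reduce_along q x \<le> q"
  using reduce_along_le[of q 0] by (simp add: le_fun_def)

lemma reduce_along_neg: "sublinear q \<Longrightarrow> reduce_along q x (- x) \<le> - q x"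
  using reduce_along_le[of q 1 x "- x"] sublinear_zero[of q] by simp

lemma sublinear_reduce_along:
  assumes q: "sublinear q"
  shows "sublinear (reduce_along q x)"
  unfolding sublinear_def
proof (intro conjI allI impI)
  fix y z
  let ?r = "reduce_along q x"
  have "?r (y + z) - (q (z + t *\<^sub>R x) - t * q x) \<le> ?r y" if t: "0 \<le> t" for t
  proof (rule reduce_along_greatest)
    fix s :: real assume s: "0 \<le> s"
    have "?r (y + z) \<le> q (y + z + (s + t) *\<^sub>R x) - (s + t) * q x"
      using reduce_along_le[OF q] s t by simp
    also have "q (y + z + (s + t) *\<^sub>R x) \<le> q (y + s *\<^sub>R x) + q (z + t *\<^sub>R x)"
      using sublinear_add_le[OF q, of "y + s *\<^sub>R x" "z + t *\<^sub>R x"]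
      by (simp add: algebra_simps scaleR_add_left)
    finally show "?r (y + z) - (q (z + t *\<^sub>R x) - t * q x) \<le> q (y + s *\<^sub>R x) - s * q x"
      by (simp add: algebra_simps)
  qed
  then have "?r (y + z) - ?r y \<le> ?r z"
    by (intro reduce_along_greatest) (smt (verit))
  then show "?r (y + z) \<le> ?r y + ?r z" by simp
next
  fix c :: real and y
  assume c: "0 \<le> c"
  let ?r = "reduce_along q x"
  show "?r (c *\<^sub>R y) = c * ?r y"
  proof (cases "c = 0")
    case True
    have "?r 0 \<le> 0" using reduce_along_le[OF q, of 0 x 0] sublinear_zero[OF q] by simp
    moreover have "0 \<le> ?r 0" by (rule reduce_along_greatest) (simp add: sublinear_scaleR[OF q])
    ultimately show ?thesis using True by simp
  next
    case False
    with c have c: "0 < c" by simp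
    show ?thesis
    proof (rule antisym)
      have "?r (c *\<^sub>R y) / c \<le> ?r y"
      proof (rule reduce_along_greatest)
        fix t :: real assume t: "0 \<le> t"
        have "?r (c *\<^sub>R y) \<le> q (c *\<^sub>R y + (c * t) *\<^sub>R x) - (c * t) * q x"
          using reduce_along_le[OF q] t c by simp
        also have "q (c *\<^sub>R y + (c * t) *\<^sub>R x) = c * q (y + t *\<^sub>R x)"
          using sublinear_scaleR[OF q, of c "y + t *\<^sub>R x"] c by (simp add: scaleR_add_right)
        finally show "?r (c *\<^sub>R y) / c \<le> q (y + t *\<^sub>R x) - t * q x"
          using c by (simp add: field_simps)
      qed
      then show "?r (c *\<^sub>R y) \<le> c * ?r y" using c by (simp add: divide_le_eq mult.commute)
      show "c * ?r y \<le> ?r (c *\<^sub>R y)"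
      proof (rule reduce_along_greatest)
        fix t :: real assume t: "0 \<le> t"
        have "c * ?r y \<le> c * (q (y + (t / c) *\<^sub>R x) - (t / c) * q x)"
          using reduce_along_le[OF q, of "t / c" x y] t c by simp
        also have "\<dots> = q (c *\<^sub>R y + t *\<^sub>R x) - t * q x"
          using c by (simp add: sublinear_scaleR[OF q, symmetric] scaleR_add_right right_diff_distrib)
        finally show "c * ?r y \<le> q (c *\<^sub>R y + t *\<^sub>R x) - t * q x" .
      qed
    qed
  qed
qed

lemma linear_if_minimal_sublinear:
  assumes q: "sublinear q"
    and minimal: "\<And>q'. sublinear q' \<Longrightarrow> q' \<le> q \<Longrightarrow> q' = q"
  shows "linear q"
proof (rule linear_if_sublinear_odd[OF q])
  fix x
  have "reduce_along q x = q"
    by (rule minimal[OF sublinear_reduce_along[OF q] reduce_along_le_self[OF q]])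
  then have "q (- x) \<le> - q x" using reduce_along_neg[OF q, of x] by simp
  then show "q (- x) = - q x" using sublinear_neg_le[OF q, of x] by simp
qed

lemma sublinear_Inf_chain:
  fixes Q :: "('a::real_vector \<Rightarrow> real) set"
  assumes ne: "Q \<noteq> {}" and sub: "\<And>q. q \<in> Q \<Longrightarrow> sublinear q"
    and bdd: "\<And>y. bdd_below ((\<lambda>q. q y) ` Q)"
    and chain: "\<And>q1 q2. q1 \<in> Q \<Longrightarrow> q2 \<in> Q \<Longrightarrow> q1 \<le> q2 \<or> q2 \<le> q1"
  shows "sublinear (\<lambda>y. INF q\<in>Q. q y)" (is "sublinear ?m")
proof -
  have m_le: "?m y \<le> q y" if "q \<in> Q" for q y
    by (rule cInf_lower[OF _ bdd]) (use that in auto)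
  have m_greatest: "a \<le> ?m y" if "\<And>q. q \<in> Q \<Longrightarrow> a \<le> q y" for a y
    by (rule cINF_greatest[OF ne that])
  have add: "?m (y + z) \<le> ?m y + ?m z" for y z
  proof -
    have "?m (y + z) \<le> q1 y + q2 z" if q1: "q1 \<in> Q" and q2: "q2 \<in> Q" for q1 q2
      using chain[OF q1 q2]
    proof
      assume "q1 \<le> q2"
      then show ?thesis
        using m_le[OF q1, of "y + z"] sublinear_add_le[OF sub[OF q1], of y z]
        by (smt (verit) le_fun_def)
    next
      assume "q2 \<le> q1"
      then show ?thesis
        using m_le[OF q2, of "y + z"] sublinear_add_le[OF sub[OF q2], of y z]
        by (smt (verit) le_fun_def)
    qed
    then have "?m (y + z) - q2 z \<le> ?m y" if "q2 \<in> Q" for q2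
      using that by (intro m_greatest) (smt (verit))
    then have "?m (y + z) - ?m y \<le> ?m z"
      by (intro m_greatest) (smt (verit))
    then show ?thesis by simp
  qed
  have hom: "?m (c *\<^sub>R y) = c * ?m y" if "0 \<le> c" for c y
  proof (cases "c = 0")
    case True
    obtain q where q: "q \<in> Q" using ne by blast
    have "?m 0 \<le> 0" using m_le[OF q, of 0] sublinear_zero[OF sub[OF q]] by simp
    moreover have "0 \<le> ?m 0" by (rule m_greatest) (simp add: sublinear_zero[OF sub])
    ultimately show ?thesis using True by simp
  next
    case False
    with \<open>0 \<le> c\<close> have c: "0 < c" by simp
    have "?m (c *\<^sub>R y) / c \<le> ?m y"
    proof (rule m_greatest)
      fix q assume q: "q \<in> Q"
      have "?m (c *\<^sub>R y) \<le> c * q y"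
        using m_le[OF q, of "c *\<^sub>R y"] sublinear_scaleR[OF sub[OF q], of c y] c by simp
      then show "?m (c *\<^sub>R y) / c \<le> q y" using c by (simp add: field_simps)
    qed
    moreover have "c * ?m y \<le> ?m (c *\<^sub>R y)"
    proof (rule m_greatest)
      fix q assume q: "q \<in> Q"
      show "c * ?m y \<le> q (c *\<^sub>R y)"
        using m_le[OF q, of y] sublinear_scaleR[OF sub[OF q], of c y] c by simp
    qed
    ultimately show ?thesis using c by (simp add: field_simps)
  qed
  show ?thesis using add hom by (simp add: sublinear_def)
qed

lemma epigraph_UNIV_subset_iff: "epigraph UNIV q1 \<subseteq> epigraph UNIV q2 \<longleftrightarrow> q2 \<le> q1"
proof
  assume "epigraph UNIV q1 \<subseteq> epigraph UNIV q2"
  then have "(y, q1 y) \<in> epigraph UNIV q2" for y by (rule subsetD) (simp add: mem_epigraph)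
  then show "q2 \<le> q1" by (simp add: le_fun_def mem_epigraph)
qed (auto simp: le_fun_def epigraph_def intro: order_trans)

text \<open>Zorn's lemma is applied to epigraphs ordered by inclusion, which reverses the pointwise
  order of functionals.\<close>

lemma sublinear_dominates_linear:
  fixes q0 :: "'a::real_vector \<Rightarrow> real"
  assumes q0: "sublinear q0"
  shows "\<exists>l. linear l \<and> l \<le> q0"
proof -
  define S where "S = {q. sublinear q \<and> q \<le> q0}"
  have q0S: "q0 \<in> S" using q0 by (simp add: S_def)
  have "\<exists>M\<in>epigraph UNIV ` S. \<forall>X\<in>epigraph UNIV ` S. M \<subseteq> X \<longrightarrow> X = M"
  proof (rule Zorn_Lemma2, intro ballI)
    fix C assume "C \<in> chains (epigraph UNIV ` S)"
    then have CS: "C \<subseteq> epigraph UNIV ` S" and chain: "\<And>X Y. X \<in> C \<Longrightarrow> Y \<in> C \<Longrightarrow> X \<subseteq> Y \<or> Y \<subseteq> X"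
      unfolding chains_def chain_subset_def by auto
    show "\<exists>U\<in>epigraph UNIV ` S. \<forall>X\<in>C. X \<subseteq> U"
    proof (cases "C = {}")
      case True
      then show ?thesis using q0S by blast
    next
      case False
      define Q where "Q = {q\<in>S. epigraph UNIV q \<in> C}"
      have Q: "Q \<noteq> {}" "\<And>q. q \<in> Q \<Longrightarrow> sublinear q \<and> q \<le> q0"
        using False CS by (auto simp: Q_def S_def)
      have "bdd_below ((\<lambda>q. q y) ` Q)" for y
      proof (rule bdd_belowI2)
        fix q assume "q \<in> Q"
        then show "- q0 (- y) \<le> q y"
          using Q(2) sublinear_neg_le[of q y] by (smt (verit) le_fun_def)
      qed
      moreover have "q1 \<le> q2 \<or> q2 \<le> q1" if "q1 \<in> Q" "q2 \<in> Q" for q1 q2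
        using chain[of "epigraph UNIV q2" "epigraph UNIV q1"] that
        by (auto simp: Q_def epigraph_UNIV_subset_iff)
      ultimately have "sublinear (\<lambda>y. INF q\<in>Q. q y)"
        using sublinear_Inf_chain[OF Q(1)] Q(2) by blast
      moreover have Inf_le: "(\<lambda>y. INF q\<in>Q. q y) \<le> q" if "q \<in> Q" for q
        using that \<open>\<And>y. bdd_below ((\<lambda>q. q y) ` Q)\<close> by (auto simp: le_fun_def intro: cInf_lower)
      moreover obtain q where "q \<in> Q" using Q(1) by blast
      ultimately have "(\<lambda>y. INF q\<in>Q. q y) \<in> S"
        using Q(2) by (auto simp: S_def intro: order_trans)
      moreover have "X \<subseteq> epigraph UNIV (\<lambda>y. INF q\<in>Q. q y)" if "X \<in> C" for X
      proof -
        obtain q where "q \<in> S" "X = epigraph UNIV q" using \<open>X \<in> C\<close> CS by blast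
        with \<open>X \<in> C\<close> have "q \<in> Q" by (simp add: Q_def)
        then show ?thesis using Inf_le \<open>X = epigraph UNIV q\<close> by (simp add: epigraph_UNIV_subset_iff)
      qed
      ultimately show ?thesis by blast
    qed
  qed
  then obtain qm where "qm \<in> S"
    and maximal: "\<And>q. q \<in> S \<Longrightarrow> epigraph UNIV qm \<subseteq> epigraph UNIV q \<Longrightarrow> epigraph UNIV q = epigraph UNIV qm"
    by blast
  then have qm: "sublinear qm" "qm \<le> q0" by (auto simp: S_def)
  have "linear qm"
  proof (rule linear_if_minimal_sublinear[OF qm(1)])
    fix q assume "sublinear q" "q \<le> qm"
    then have "q \<in> S" "epigraph UNIV qm \<subseteq> epigraph UNIV q"
      using qm(2) by (auto simp: S_def epigraph_UNIV_subset_iff)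
    then have "qm \<le> q" using maximal by (metis epigraph_UNIV_subset_iff order_refl)
    with \<open>q \<le> qm\<close> show "q = qm" by (rule antisym)
  qed
  then show ?thesis using qm(2) by blast
qed

lemma exists_norming_blinfun:
  fixes v :: "'a::real_normed_vector"
  obtains L :: "'a \<Rightarrow>\<^sub>L real" where "norm L \<le> 1" "L v = norm v"
proof -
  have norm: "sublinear (norm :: 'a \<Rightarrow> real)"
    by (simp add: sublinear_def norm_triangle_ineq)
  then obtain l where l: "linear l" "l \<le> reduce_along norm v"
    using sublinear_dominates_linear sublinear_reduce_along by blast
  have l_le: "l y \<le> norm y" for y
    using l(2) reduce_along_le_self[OF norm, of v] by (auto simp: le_fun_def intro: order_trans)
  have "l (- v) \<le> - norm v"
    using l(2) reduce_along_neg[OF norm, of v] by (auto simp: le_fun_def intro: order_trans)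
  then have lv: "l v = norm v"
    using l_le[of v] linear_neg[OF l(1), of v] by simp
  have bound: "norm (l y) \<le> norm y * 1" for y
    using l_le[of y] l_le[of "- y"] linear_neg[OF l(1), of y] by auto
  have "bounded_linear l"
    using bounded_linear_intro[OF linear_add[OF l(1)] linear_scale[OF l(1)] bound] .
  then have "norm (Blinfun l) \<le> 1" "Blinfun l v = norm v"
    using bound lv by (auto simp: bounded_linear_Blinfun_apply intro: norm_blinfun_bound)
  then show ?thesis by (rule that)
qed

lemma zero_notin_interior_subdiff:
  fixes f :: "'a::real_normed_vector \<Rightarrow> ereal"
  assumes subgrad: "\<And>k. xs k \<in> subdiff f (x k)"
    and x_unbounded: "filterlim (\<lambda>k. norm (x k)) at_top sequentially"
    and xs_0: "(\<lambda>k. norm (xs k)) \<longlonglongrightarrow> 0"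
  shows "0 \<notin> interior (subdiff f x0)"
proof
  assume "0 \<in> interior (subdiff f x0)"
  then obtain r where r: "0 < r" "ball 0 r \<subseteq> subdiff f x0"
    by (meson mem_interior)
  then have "0 \<in> subdiff f x0" by auto
  then obtain c where c: "f x0 = ereal c"
    by (cases "f x0") (auto simp: subdiff_def)
  have "\<forall>\<^sub>F k in sequentially. norm (xs k) < r / 2 \<and> norm x0 + 1 \<le> norm (x k)"
    using order_tendstoD(2)[OF xs_0, of "r / 2"] r(1) x_unbounded
    by (auto simp: filterlim_at_top intro: eventually_conj)
  then obtain k where k: "norm (xs k) < r / 2" "norm x0 + 1 \<le> norm (x k)"
    using eventually_sequentially by auto
  define v where "v = x k - x0"
  have v: "1 \<le> norm v"
    using k(2) norm_triangle_ineq[of v x0] by (simp add: v_def)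
  obtain a where a: "f (x k) = ereal a"
    using subgrad[of k] by (cases "f (x k)") (auto simp: subdiff_def)
  obtain L :: "'a \<Rightarrow>\<^sub>L real" where L: "norm L \<le> 1" "L v = norm v"
    by (rule exists_norming_blinfun)
  have "norm ((r / 2) *\<^sub>R L) < r" using L(1) r(1) by simp
  then have "(r / 2) *\<^sub>R L \<in> subdiff f x0" using r(2) by auto
  then have "ereal (((r / 2) *\<^sub>R L) v) \<le> f (x k) - f x0"
    by (auto simp: subdiff_def v_def split: if_splits)
  then have "(r / 2) * norm v \<le> a - c" using a c L(2) by (simp add: scaleR_blinfun.rep_eq)
  moreover have "ereal (xs k (x0 - x k)) \<le> f x0 - f (x k)"
    using subgrad[of k] by (auto simp: subdiff_def split: if_splits)
  then have "a - c \<le> - xs k (x0 - x k)" using a c by simp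
  moreover have "- xs k (x0 - x k) \<le> norm (xs k) * norm v"
    using norm_blinfun[of "xs k" "x0 - x k"] by (simp add: v_def norm_minus_commute)
  moreover have "norm (xs k) * norm v < (r / 2) * norm v"
    using k(1) v by (intro mult_strict_right_mono) auto
  ultimately show False by linarith
qed

lemma tau_eq_0:
  fixes f :: "'a::real_normed_vector \<Rightarrow> ereal"
  assumes subgrad: "\<And>k. xs k \<in> subdiff f (x k)"
    and x_unbounded: "filterlim (\<lambda>k. norm (x k)) at_top sequentially"
    and xs_0: "(\<lambda>k. norm (xs k)) \<longlonglongrightarrow> 0"
    and bounded_below: "\<And>k. ereal b \<le> f (x k)"
    and \<xi>: "0 < \<xi>"
  shows "tau f x0 \<xi> \<delta> = 0"
proof -
  define U where "U = {u. ereal (- \<xi> * norm (u - x0) - \<delta>) \<le> f u}"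
  have tau: "tau f x0 \<xi> \<delta> = (INF u\<in>U. dist0 (subdiff f u))"
    using zero_notin_interior_subdiff[OF subgrad x_unbounded xs_0] by (simp add: tau_def U_def)
  have "tau f x0 \<xi> \<delta> \<le> 0"
  proof (rule ereal_le_epsilon2)
    fix \<eta> :: real assume "0 < \<eta>"
    have "\<forall>\<^sub>F k in sequentially. norm (xs k) < \<eta> \<and> norm x0 + (\<bar>b\<bar> + \<bar>\<delta>\<bar>) / \<xi> \<le> norm (x k)"
      using order_tendstoD(2)[OF xs_0 \<open>0 < \<eta>\<close>] x_unbounded
      by (auto simp: filterlim_at_top intro: eventually_conj)
    then obtain k where k: "norm (xs k) < \<eta>" "norm x0 + (\<bar>b\<bar> + \<bar>\<delta>\<bar>) / \<xi> \<le> norm (x k)"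
      using eventually_sequentially by auto
    then have "(\<bar>b\<bar> + \<bar>\<delta>\<bar>) / \<xi> \<le> norm (x k - x0)"
      using norm_triangle_ineq[of "x k - x0" x0] by simp
    then have "\<bar>b\<bar> + \<bar>\<delta>\<bar> \<le> \<xi> * norm (x k - x0)"
      using \<xi> by (simp add: divide_le_eq mult.commute)
    then have "ereal (- \<xi> * norm (x k - x0) - \<delta>) \<le> ereal b" by simp
    then have "x k \<in> U"
      using bounded_below[of k] unfolding U_def by (blast intro: order_trans)
    then have "tau f x0 \<xi> \<delta> \<le> dist0 (subdiff f (x k))"
      unfolding tau by (rule INF_lower)
    also have "\<dots> \<le> ereal (norm (xs k))"
      unfolding dist0_def using subgrad by (rule INF_lower)
    also have "\<dots> \<le> 0 + ereal \<eta>" using k(1) by simp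
    finally show "tau f x0 \<xi> \<delta> \<le> 0 + ereal \<eta>" .
  qed
  moreover have "0 \<le> tau f x0 \<xi> \<delta>"
    unfolding tau dist0_def by (intro INF_greatest) simp
  ultimately show ?thesis by simp
qed

theorem mainTheorem6:
  fixes f :: "'a::banach \<Rightarrow> ereal"
    and x :: "nat \<Rightarrow> 'a" and xs :: "nat \<Rightarrow> ('a \<Rightarrow>\<^sub>L real)"
  assumes "f \<in> Gamma0"
    and "level0 f \<noteq> {}"
    and "\<And>k. xs k \<in> subdiff f (x k)"
    and "filterlim (\<lambda>k. norm (x k)) at_top sequentially"
    and "(\<lambda>k. norm (xs k)) \<longlonglongrightarrow> 0"
    and "\<exists>b::real. \<forall>k. ereal b \<le> f (x k)"
  shows "\<forall>\<epsilon>::real. 0 \<le> \<epsilon> \<and> ereal \<epsilon> \<le> subdiff_bd f \<longrightarrow>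
           (\<forall>g \<in> Ptb f \<epsilon>. \<exists>c::real. \<forall>u. g u = f u + ereal c)"
proof (intro allI impI ballI)
  fix \<epsilon> :: real and g
  assume \<epsilon>: "0 \<le> \<epsilon> \<and> ereal \<epsilon> \<le> subdiff_bd f" and "g \<in> Ptb f \<epsilon>"
  then obtain p x0 \<xi> where g: "g = (\<lambda>u. f u + ereal (p u))" and "0 \<le> \<xi>"
    and budget: "ereal \<xi> + subdiff_bd f - tau f x0 \<xi> \<bar>p x0\<bar> \<le> ereal \<epsilon>"
    and lipschitz: "\<forall>u. \<bar>p u - p x0\<bar> \<le> \<xi> * norm (u - x0)"
    unfolding Ptb_def by blast
  obtain b where b: "\<And>k. ereal b \<le> f (x k)" using assms(6) by blast
  have "\<xi> = 0"
  proof (rule ccontr)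
    assume "\<xi> \<noteq> 0"
    with \<open>0 \<le> \<xi>\<close> have "0 < \<xi>" by simp
    then have "tau f x0 \<xi> \<bar>p x0\<bar> = 0"
      using tau_eq_0[OF assms(3-5) b] by blast
    then show False
      using budget \<epsilon> \<open>0 < \<xi>\<close> by (cases "subdiff_bd f") auto
  qed
  then have "\<forall>u. g u = f u + ereal (p x0)"
    using lipschitz by (simp add: g) metis
  then show "\<exists>c::real. \<forall>u. g u = f u + ereal c" by blast
qed

end
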